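(* Let $D(\mathbf x)\in\mathbb F^k[\mathbf x]$ have a cone-closed basis. Then $D$ is $(k+1)$-cone concentrated and $(\lg 2k)$-support concentrated.
   Context: For $D\in\mathbb F^k[\mathbf x]$, $\mathrm{lrsp}(D)$ is the span of its coefficient vectors in $\mathbb F^k$. A set of monomials is cone-closed if it contains all submonomials ($\mathbf x^{\mathbf e'}$ with $\mathbf e'\le\mathbf e$ coordinatewise) of each of its elements; $D$ has a cone-closed basis if some cone-closed set of monomials has coefficients forming a basis of $\mathrm{lrsp}(D)$. The cone-size of $\mathbf x^{\mathbf e}$ is $\prod_i(e_i+1)$; its support size is the number of $i$ with $e_i>0$. $D$ is $\ell$-cone concentrated (resp. $\ell$-support concentrated) if the coefficients of the monomials of cone-size $<\ell$ (resp. support size $<\ell$) span $\mathrm{lrsp}(D)$. *)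

theory Defs
  imports "HOL-Analysis.Analysis"
begin

text \<open>A polynomial D in F^k[x_1..x_n] is represented by its coefficient map:
  monomials x^e are exponent vectors e :: nat \<Rightarrow> nat (variables indexed 0..n-1),
  and D e :: 'a^'k is the coefficient vector of x^e. F^k is 'a^'k with k = CARD('k).\<close>

definition vpoly :: "nat \<Rightarrow> ((nat \<Rightarrow> nat) \<Rightarrow> 'a::field^'k) \<Rightarrow> bool" where
  "vpoly n D \<longleftrightarrow> finite {e. D e \<noteq> 0} \<and> (\<forall>e. D e \<noteq> 0 \<longrightarrow> (\<forall>i\<ge>n. e i = 0))"

definition lrsp :: "((nat \<Rightarrow> nat) \<Rightarrow> 'a::field^'k) \<Rightarrow> ('a^'k) set" where
  "lrsp D = vec.span (range D)"

definition cone_closed :: "(nat \<Rightarrow> nat) set \<Rightarrow> bool" where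
  "cone_closed S \<longleftrightarrow> (\<forall>e\<in>S. \<forall>e'. (\<forall>i. e' i \<le> e i) \<longrightarrow> e' \<in> S)"

definition has_cone_closed_basis :: "((nat \<Rightarrow> nat) \<Rightarrow> 'a::field^'k) \<Rightarrow> bool" where
  "has_cone_closed_basis D \<longleftrightarrow>
     (\<exists>S. cone_closed S \<and> inj_on D S \<and> vec.independent (D ` S) \<and> vec.span (D ` S) = lrsp D)"

definition cone_size :: "nat \<Rightarrow> (nat \<Rightarrow> nat) \<Rightarrow> nat" where
  "cone_size n e = (\<Prod>i<n. e i + 1)"

definition support_size :: "nat \<Rightarrow> (nat \<Rightarrow> nat) \<Rightarrow> nat" where
  "support_size n e = card {i. i < n \<and> 0 < e i}"

definition cone_concentrated :: "nat \<Rightarrow> real \<Rightarrow> ((nat \<Rightarrow> nat) \<Rightarrow> 'a::field^'k) \<Rightarrow> bool" where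
  "cone_concentrated n l D \<longleftrightarrow> vec.span (D ` {e. real (cone_size n e) < l}) = lrsp D"

definition support_concentrated :: "nat \<Rightarrow> real \<Rightarrow> ((nat \<Rightarrow> nat) \<Rightarrow> 'a::field^'k) \<Rightarrow> bool" where
  "support_concentrated n l D \<longleftrightarrow> vec.span (D ` {e. real (support_size n e) < l}) = lrsp D"

end

theory Submission
  imports Defs
begin

text \<open>A cone-closed set S of monomials contains the whole cone below each of its members, so every
  member has cone size at most |S|; and |S| \<le> k because the coefficient vectors of S are independent
  in F^k. Since each variable in the support contributes a factor at least 2 to the cone size,
  2^(support size) \<le> k as well. Hence the basis monomials, which already span lrsp D, lie among
  those of cone size < k + 1 and of support size < lg 2k.\<close>

lemma cone_size_le_card_cone_closed:
  fixes S :: "(nat \<Rightarrow> nat) set"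
  assumes "cone_closed S" and "finite S" and "e \<in> S"
  shows "cone_size n e \<le> card S"
proof -
  define restrict where "restrict = (\<lambda>f::nat \<Rightarrow> nat. \<lambda>i. if i < n then f i else 0)"
  define cone where "cone = PiE {..<n} (\<lambda>i. {0..e i})"
  have "inj_on restrict cone"
  proof (rule inj_onI)
    fix f h assume "f \<in> cone" "h \<in> cone" "restrict f = restrict h"
    then show "f = h"
      by (intro ext) (metis (no_types, lifting) PiE_arb cone_def lessThan_iff restrict_def)
  qed
  moreover have "restrict ` cone \<subseteq> S"
  proof
    fix x assume "x \<in> restrict ` cone"
    then have "\<forall>i. x i \<le> e i" by (auto simp: restrict_def cone_def PiE_def Pi_def)
    with assms(1,3) show "x \<in> S" unfolding cone_closed_def by blast
  qed
  ultimately have "card cone \<le> card S"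
    by (metis assms(2) card_image card_mono)
  then show ?thesis
    by (simp add: cone_size_def cone_def card_PiE)
qed

lemma two_power_support_size_le_cone_size: "2 ^ support_size n e \<le> cone_size n e"
proof -
  have "(2::nat) ^ support_size n e = (\<Prod>i\<in>{i\<in>{..<n}. 0 < e i}. 2)"
    by (simp add: support_size_def)
  also have "\<dots> = (\<Prod>i<n. if 0 < e i then 2 else 1)"
    by (subst prod.inter_filter) auto
  also have "\<dots> \<le> (\<Prod>i<n. e i + 1)"
    by (rule prod_mono) auto
  finally show ?thesis by (simp add: cone_size_def)
qed

lemma has_cone_closed_basisE:
  fixes D :: "(nat \<Rightarrow> nat) \<Rightarrow> 'a::field ^ 'k"
  assumes "has_cone_closed_basis D"
  obtains S where "cone_closed S" "finite S" "card S \<le> CARD('k)" "vec.span (D ` S) = lrsp D"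
proof -
  obtain S where S: "cone_closed S" "inj_on D S" "vec.independent (D ` S)"
    "vec.span (D ` S) = lrsp D"
    using assms unfolding has_cone_closed_basis_def by blast
  have "finite (D ` S)"
    using vec.independent_bound_general[OF S(3)] by blast
  then have "finite S"
    using S(2) finite_image_iff by blast
  have "card (D ` S) \<le> vec.dim (UNIV :: ('a ^ 'k) set)"
    by (rule vec.independent_card_le_dim[OF _ S(3)]) auto
  then have "card S \<le> CARD('k)"
    by (metis S(2) card_image vec_dim_card)
  with S \<open>finite S\<close> that show ?thesis by blast
qed

lemma span_image_superset_eq_lrsp:
  assumes "vec.span (D ` S) = lrsp D" and "S \<subseteq> T"
  shows "vec.span (D ` T) = lrsp D"
proof
  show "vec.span (D ` T) \<subseteq> lrsp D"
    unfolding lrsp_def by (rule vec.span_mono) auto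
  show "lrsp D \<subseteq> vec.span (D ` T)"
    unfolding assms(1)[symmetric] using assms(2) by (intro vec.span_mono) auto
qed

lemma less_log2_double_if_two_power_le:
  assumes "2 ^ m \<le> k" and "0 < k"
  shows "real m < log 2 (2 * real k)"
proof -
  have "real m = log 2 (2 ^ m)"
    by (simp add: log_nat_power)
  also have "\<dots> \<le> log 2 (real k)"
  proof -
    have "(2::real) ^ m \<le> real k"
      by (metis assms(1) of_nat_le_iff of_nat_numeral of_nat_power)
    then show ?thesis
      using assms(2) by (subst log_le_cancel_iff) auto
  qed
  also have "\<dots> < log 2 (2 * real k)"
    using assms(2) by (simp add: log_mult)
  finally show ?thesis .
qed

theorem lemma4p1:
  fixes D :: "(nat \<Rightarrow> nat) \<Rightarrow> 'a::field ^ 'k" and n :: nat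
  assumes "vpoly n D"
    and "has_cone_closed_basis D"
  shows "cone_concentrated n (real CARD('k) + 1) D
       \<and> support_concentrated n (log 2 (2 * real CARD('k))) D"
proof -
  obtain S where S: "cone_closed S" "finite S" "card S \<le> CARD('k)" "vec.span (D ` S) = lrsp D"
    using assms(2) by (rule has_cone_closed_basisE)
  have cone: "cone_size n e \<le> CARD('k)" if "e \<in> S" for e
    using cone_size_le_card_cone_closed[OF S(1,2) that, of n] S(3) by linarith
  have "S \<subseteq> {e. real (cone_size n e) < real CARD('k) + 1}"
    using cone by force
  moreover have "S \<subseteq> {e. real (support_size n e) < log 2 (2 * real CARD('k))}"
    using cone two_power_support_size_le_cone_size less_log2_double_if_two_power_le
    by (metis (no_types, lifting) le_trans mem_Collect_eq subsetI zero_less_card_finite)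
  ultimately show ?thesis
    unfolding cone_concentrated_def support_concentrated_def
    using span_image_superset_eq_lrsp[OF S(4)] by blast
qed

end
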